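(* Let $p/q$ be an even rational parameter and $P=2p/(p+q)$. For every tile center $c=(x,y)$, the label assigned to $(x,-y)$ by the tile description is obtained from the label assigned to $(x,y)$ by swapping N with S (and leaving E and W unchanged). Equivalently, the tiling produced by $(\Xi_P,X_P)$ is invariant under reflection in the $x$-axis.
   Context: An even rational parameter is a rational $p/q\in(0,1)$, $p,q$ positive coprime integers, $pq$ even; $\omega=p+q$, $P=2p/\omega$. Tile centers are the points $(m+\frac12,n+\frac12)$, $m,n\in\mathbb Z$; each is the center of a unit square with edges N, S, E, W. Let $\Lambda_P\subset\mathbb R^3$ be the lattice generated by $(2,P,P),(0,2,0),(0,0,2)$, $X_P=\mathbb R^3/\Lambda_P$ with coordinates $(T,U_1,U_2)$ and fundamental domain $[-1,1]^3$, and $\Xi_P(x,y)=(2Px+2y,2Px,2Px+2Py)\bmod\Lambda_P$. Each fiber $\{T\}\times[-1,1]^2$ is partitioned: given $u_1\le u_2\le u_3$, the lines $U_1=u_i$, $U_2=u_i$ cut $[-1,1]^2$ into a $4\times4$ grid of rectangles indexed by (column $a$, row $b$), columns in increasing $U_1$, rows in increasing $U_2$. Special rectangles with single letters: for $T\in[-1,-1+P]$: $(u_1,u_2,u_3)=(T,1-P,2-P+T)$, W $(4,4)$, N $(1,3)$, E $(2,2)$, S $(3,1)$; for $T\in[-1+P,1-P]$: $(-1+P,T,1-P)$, N $(1,4)$, E $(3,3)$, W $(2,2)$, S $(4,1)$; for $T\in[1-P,1]$: $(-2+P+T,-1+P,T)$, N $(2,4)$, W $(3,3)$, S $(4,2)$,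 E $(1,1)$. A non-special rectangle gets the unordered pair of letters of the special rectangles in its column and in its row; special rectangles get the empty label. The label of a tile center $c$ is the label of the rectangle whose interior contains the representative of $\Xi_P(c)$ in $[-1,1]^3$ (known to be well defined for even rational parameters); a label $\{X,Y\}$ is drawn as a segment joining the midpoints of edges $X$ and $Y$ of the unit square centered at $c$. *)

theory Defs
  imports Complex_Main
begin

datatype dir = N | S | E | W

definition even_rational_param :: "nat \<Rightarrow> nat \<Rightarrow> bool" where
  "even_rational_param p q \<longleftrightarrow> 0 < p \<and> 0 < q \<and> p < q \<and> coprime p q \<and> even (p * q)"

definition Pof :: "nat \<Rightarrow> nat \<Rightarrow> real" where
  "Pof p q = 2 * real p / real (p + q)"

definition tile_center :: "int \<Rightarrow> int \<Rightarrow> real \<times> real" where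
  "tile_center m n = (real_of_int m + 1/2, real_of_int n + 1/2)"

definition Lambda :: "real \<Rightarrow> (real \<times> real \<times> real) set" where
  "Lambda PP = {(2 * of_int i, of_int i * PP + 2 * of_int j, of_int i * PP + 2 * of_int k)
                 | i j k :: int. True}"

text \<open>The map Xi_P (before reduction modulo the lattice).\<close>
definition Xi :: "real \<Rightarrow> real \<times> real \<Rightarrow> real \<times> real \<times> real" where
  "Xi PP c = (2 * PP * fst c + 2 * snd c, 2 * PP * fst c, 2 * PP * fst c + 2 * PP * snd c)"

definition regime_ok :: "real \<Rightarrow> nat \<Rightarrow> real \<Rightarrow> bool" where
  "regime_ok PP r T \<longleftrightarrow>
     (r = 1 \<and> -1 \<le> T \<and> T \<le> -1 + PP) \<or>
     (r = 2 \<and> -1 + PP \<le> T \<and> T \<le> 1 - PP) \<or>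
     (r = 3 \<and> 1 - PP \<le> T \<and> T \<le> 1)"

definition cuts :: "real \<Rightarrow> nat \<Rightarrow> real \<Rightarrow> real \<times> real \<times> real" where
  "cuts PP r T =
     (if r = 1 then (T, 1 - PP, 2 - PP + T)
      else if r = 2 then (-1 + PP, T, 1 - PP)
      else (-2 + PP + T, -1 + PP, T))"

definition cutv :: "real \<times> real \<times> real \<Rightarrow> nat \<Rightarrow> real" where
  "cutv u i = (case u of (u1, u2, u3) \<Rightarrow>
      (if i = 0 then -1 else if i = 1 then u1 else if i = 2 then u2 else if i = 3 then u3 else 1))"

definition in_rect_interior :: "real \<times> real \<times> real \<Rightarrow> nat \<Rightarrow> nat \<Rightarrow> real \<Rightarrow> real \<Rightarrow> bool" where
  "in_rect_interior u a b U1 U2 \<longleftrightarrow>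
     a \<in> {1..4} \<and> b \<in> {1..4} \<and>
     cutv u (a - 1) < U1 \<and> U1 < cutv u a \<and> cutv u (b - 1) < U2 \<and> U2 < cutv u b"

text \<open>Special rectangles (column, row, letter) in each regime.\<close>
definition special :: "nat \<Rightarrow> (nat \<times> nat \<times> dir) set" where
  "special r =
     (if r = 1 then {(4,4,W), (1,3,N), (2,2,E), (3,1,S)}
      else if r = 2 then {(1,4,N), (3,3,E), (2,2,W), (4,1,S)}
      else {(2,4,N), (3,3,W), (4,2,S), (1,1,E)})"

definition rect_label :: "nat \<Rightarrow> nat \<Rightarrow> nat \<Rightarrow> dir set" where
  "rect_label r a b =
     (if \<exists>d. (a, b, d) \<in> special r then {}
      else {d. \<exists>b'. (a, b', d) \<in> special r} \<union> {d. \<exists>a'. (a', b, d) \<in> special r})"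

definition has_label :: "nat \<Rightarrow> nat \<Rightarrow> real \<times> real \<Rightarrow> dir set \<Rightarrow> bool" where
  "has_label p q c L \<longleftrightarrow>
     (\<exists>T U1 U2 v1 v2 v3 r a b.
        (v1, v2, v3) \<in> Lambda (Pof p q) \<and>
        (T - v1, U1 - v2, U2 - v3) = Xi (Pof p q) c \<and>
        T \<in> {-1..1} \<and> U1 \<in> {-1..1} \<and> U2 \<in> {-1..1} \<and>
        regime_ok (Pof p q) r T \<and>
        in_rect_interior (cuts (Pof p q) r T) a b U1 U2 \<and>
        L = rect_label r a b)"

definition tile_label :: "nat \<Rightarrow> nat \<Rightarrow> real \<times> real \<Rightarrow> dir set" where
  "tile_label p q c = (THE L. has_label p q c L)"

definition swapNS :: "dir \<Rightarrow> dir" where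
  "swapNS d = (case d of N \<Rightarrow> S | S \<Rightarrow> N | E \<Rightarrow> E | W \<Rightarrow> W)"

end

theory Submission
  imports Defs
begin

text \<open>
  Since 2y is an integer, \<open>\<Xi>\<^sub>P(x,-y)\<close> is obtained from \<open>\<Xi>\<^sub>P(x,y)\<close> by subtracting a lattice
  vector and exchanging \<open>U\<^sub>1\<close> and \<open>U\<^sub>2\<close>. Exchanging the two coordinates transposes the
  grid in each fibre, and the special rectangles of every regime are transposed into themselves
  with N and S exchanged, so the label is mapped by \<open>swapNS\<close>.

  It remains to see that labels of tile centers are well defined. Representatives in
  \<open>[-1,1)\<^sup>3\<close> are unique; a representative with \<open>T = 1\<close> or lying on the boundary of two
  regimes carries the same label in the adjacent description. Existence uses that \<open>p + q\<close> is
  odd: multiplied by \<open>p + q\<close>, the coordinates \<open>U\<^sub>1, U\<^sub>2\<close> of a tile center are even integers,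
  whereas \<open>T\<close> and hence every grid line \<open>u\<^sub>i\<close> and \<open>\<plusminus>1\<close> are odd integers, so the point lies in the
  interior of a rectangle.
\<close>

lemma mem_1_4_cases: "a \<in> {1..4::nat} \<Longrightarrow> a = 1 \<or> a = 2 \<or> a = 3 \<or> a = 4"
  by auto

definition sorted_cuts :: "real \<times> real \<times> real \<Rightarrow> bool" where
  "sorted_cuts u \<longleftrightarrow>
     -1 \<le> cutv u 1 \<and> cutv u 1 \<le> cutv u 2 \<and> cutv u 2 \<le> cutv u 3 \<and> cutv u 3 \<le> 1"

lemma regime_ok_bounds: "0 < P \<Longrightarrow> P < 1 \<Longrightarrow> regime_ok P r T \<Longrightarrow> T \<in> {-1..1}"
  by (auto simp: regime_ok_def)

lemma sorted_cuts_cuts: "0 < P \<Longrightarrow> P < 1 \<Longrightarrow> regime_ok P r T \<Longrightarrow> sorted_cuts (cuts P r T)"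
  by (auto simp: sorted_cuts_def regime_ok_def cuts_def cutv_def)

definition canonical_regime :: "real \<Rightarrow> real \<Rightarrow> nat" where
  "canonical_regime P T = (if T \<le> -1 + P then 1 else if T \<le> 1 - P then 2 else 3)"

lemma regime_ok_canonical_regime:
  "0 < P \<Longrightarrow> P < 1 \<Longrightarrow> T \<in> {-1..1} \<Longrightarrow> regime_ok P (canonical_regime P T) T"
  by (auto simp: canonical_regime_def regime_ok_def)

definition in_cell :: "real \<times> real \<times> real \<Rightarrow> nat \<Rightarrow> real \<Rightarrow> bool" where
  "in_cell u a z \<longleftrightarrow> a \<in> {1..4} \<and> cutv u (a - 1) < z \<and> z < cutv u a"

lemma in_rect_interior_iff_in_cell:
  "in_rect_interior u a b U1 U2 \<longleftrightarrow> in_cell u a U1 \<and> in_cell u b U2"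
  by (auto simp: in_rect_interior_def in_cell_def)

lemma in_cell_bounds:
  assumes "sorted_cuts u" "in_cell u a z"
  shows "z \<in> {-1<..<1}"
proof -
  obtain u1 u2 u3 where "u = (u1, u2, u3)" by (cases u)
  then show ?thesis
    using assms mem_1_4_cases[of a] by (auto simp: sorted_cuts_def in_cell_def cutv_def)
qed

lemma in_cell_unique:
  assumes "sorted_cuts u" "in_cell u a z" "in_cell u a' z"
  shows "a = a'"
proof -
  obtain u1 u2 u3 where "u = (u1, u2, u3)" by (cases u)
  then show ?thesis
    using assms mem_1_4_cases[of a] mem_1_4_cases[of a']
    by (auto simp: sorted_cuts_def in_cell_def cutv_def)
qed

lemma in_cell_exists:
  assumes "sorted_cuts u" "z \<in> {-1<..<1}" "z \<notin> {cutv u 1, cutv u 2, cutv u 3}"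
  obtains a where "in_cell u a z"
proof -
  obtain u1 u2 u3 where u: "u = (u1, u2, u3)" by (cases u)
  then have "z < u1 \<or> u1 < z \<and> z < u2 \<or> u2 < z \<and> z < u3 \<or> u3 < z"
    using assms by (auto simp: sorted_cuts_def cutv_def)
  then consider "in_cell u 1 z" | "in_cell u 2 z" | "in_cell u 3 z" | "in_cell u 4 z"
    using assms(2) u by (auto simp: in_cell_def cutv_def)
  then show thesis using that by cases
qed

lemma in_rect_interior_transfer:
  assumes "\<And>a z. in_cell u a z \<Longrightarrow> a \<in> A \<and> in_cell u' (g a) (f z)"
    and "\<And>a b. a \<in> A \<Longrightarrow> b \<in> A \<Longrightarrow> rect_label r' (g a) (g b) = rect_label r a b"
    and "in_rect_interior u a b U1 U2"
  shows "in_rect_interior u' (g a) (g b) (f U1) (f U2) \<and> rect_label r' (g a) (g b) = rect_label r a b"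
  using assms by (auto simp: in_rect_interior_iff_in_cell)

lemma swapNS_swapNS [simp]: "swapNS (swapNS d) = d"
  by (cases d) (auto simp: swapNS_def)

lemma special_transpose: "(b, a, d) \<in> special r \<longleftrightarrow> (a, b, swapNS d) \<in> special r"
  by (cases d) (auto simp: special_def swapNS_def)

lemma rect_label_transpose: "rect_label r b a = swapNS ` rect_label r a b"
proof (rule set_eqI)
  fix d
  have special_iff: "(\<exists>d. (b, a, d) \<in> special r) \<longleftrightarrow> (\<exists>d. (a, b, d) \<in> special r)"
    by (metis special_transpose swapNS_swapNS)
  have "d \<in> swapNS ` rect_label r a b \<longleftrightarrow> swapNS d \<in> rect_label r a b"
    by (metis image_iff swapNS_swapNS)
  also have "\<dots> \<longleftrightarrow> d \<in> rect_label r b a"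
    unfolding rect_label_def using special_iff
    by (simp add: special_transpose[of b _ d] special_transpose[of _ a d]) blast
  finally show "d \<in> rect_label r b a \<longleftrightarrow> d \<in> swapNS ` rect_label r a b" ..
qed

lemma rect_regime2_as_regime1:
  assumes "0 < P" "P < 1" "in_rect_interior (cuts P 2 (-1 + P)) a b U1 U2"
  obtains a' b' where "in_rect_interior (cuts P 1 (-1 + P)) a' b' U1 U2"
    "rect_label 1 a' b' = rect_label 2 a b"
proof -
  let ?g = "\<lambda>a::nat. if a = 1 then 1 else if a = 3 then 2 else 3"
  have "in_rect_interior (cuts P 1 (-1 + P)) (?g a) (?g b) U1 U2 \<and>
      rect_label 1 (?g a) (?g b) = rect_label 2 a b"
  proof (rule in_rect_interior_transfer[where f = "\<lambda>z. z", OF _ _ assms(3)])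
    show "a \<in> {1, 3, 4} \<and> in_cell (cuts P 1 (-1 + P)) (?g a) z"
      if "in_cell (cuts P 2 (-1 + P)) a z" for a z
      using that assms mem_1_4_cases[of a] by (auto simp: in_cell_def cuts_def cutv_def)
    show "rect_label 1 (?g a) (?g b) = rect_label 2 a b" if "a \<in> {1, 3, 4}" "b \<in> {1, 3, 4}" for a b
      using that by (auto simp: rect_label_def special_def)
  qed
  then show thesis using that by blast
qed

lemma rect_regime3_as_regime2:
  assumes "0 < P" "P < 1" "in_rect_interior (cuts P 3 (1 - P)) a b U1 U2"
  obtains a' b' where "in_rect_interior (cuts P 2 (1 - P)) a' b' U1 U2"
    "rect_label 2 a' b' = rect_label 3 a b"
proof -
  let ?g = "\<lambda>a::nat. if a = 2 then 1 else if a = 3 then 2 else 4"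
  have "in_rect_interior (cuts P 2 (1 - P)) (?g a) (?g b) U1 U2 \<and>
      rect_label 2 (?g a) (?g b) = rect_label 3 a b"
  proof (rule in_rect_interior_transfer[where f = "\<lambda>z. z", OF _ _ assms(3)])
    show "a \<in> {2, 3, 4} \<and> in_cell (cuts P 2 (1 - P)) (?g a) z"
      if "in_cell (cuts P 3 (1 - P)) a z" for a z
      using that assms mem_1_4_cases[of a] by (auto simp: in_cell_def cuts_def cutv_def)
    show "rect_label 2 (?g a) (?g b) = rect_label 3 a b" if "a \<in> {2, 3, 4}" "b \<in> {2, 3, 4}" for a b
      using that by (auto simp: rect_label_def special_def)
  qed
  then show thesis using that by blast
qed

definition Lambda_rep :: "real \<Rightarrow> real \<times> real \<times> real \<Rightarrow> real \<Rightarrow> real \<Rightarrow> real \<Rightarrow> bool" where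
  "Lambda_rep P X T U1 U2 \<longleftrightarrow> (\<exists>i j k :: int.
     X = (T - 2 * of_int i, U1 - (of_int i * P + 2 * of_int j), U2 - (of_int i * P + 2 * of_int k)))"

lemma even_shift_into_interval:
  obtains i :: int where "z + 2 * of_int i \<in> {-1..<1::real}"
proof
  show "z + 2 * of_int (- \<lfloor>(z + 1) / 2\<rfloor>) \<in> {-1..<1}"
    using floor_correct[of "(z + 1) / 2"] by (auto simp: field_simps)
qed

lemma Lambda_rep_exists:
  obtains T U1 U2 where "Lambda_rep P X T U1 U2" "T \<in> {-1..<1}" "U1 \<in> {-1..<1}" "U2 \<in> {-1..<1}"
proof -
  obtain X1 X2 X3 where X: "X = (X1, X2, X3)" by (cases X)
  obtain i :: int where i: "X1 + 2 * of_int i \<in> {-1..<1}"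
    by (rule even_shift_into_interval)
  obtain j :: int where j: "X2 + of_int i * P + 2 * of_int j \<in> {-1..<1}"
    by (rule even_shift_into_interval)
  obtain k :: int where k: "X3 + of_int i * P + 2 * of_int k \<in> {-1..<1}"
    by (rule even_shift_into_interval)
  have "Lambda_rep P X (X1 + 2 * of_int i) (X2 + of_int i * P + 2 * of_int j)
      (X3 + of_int i * P + 2 * of_int k)"
    unfolding Lambda_rep_def X by (intro exI[of _ i] exI[of _ j] exI[of _ k]) simp
  then show thesis using i j k by (rule that)
qed

lemma Lambda_rep_unique:
  assumes "Lambda_rep P X T U1 U2" "Lambda_rep P X T' U1' U2'"
    and "T \<in> {-1..<1}" "U1 \<in> {-1..<1}" "U2 \<in> {-1..<1}"
    and "T' \<in> {-1..<1}" "U1' \<in> {-1..<1}" "U2' \<in> {-1..<1}"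
  shows "T' = T" "U1' = U1" "U2' = U2"
proof -
  have even_diff_zero: "d = 0" if "2 * of_int d \<in> {-2<..<2::real}" for d :: int
    using that by auto
  obtain i j k i' j' k' :: int where
    X: "X = (T - 2 * of_int i, U1 - (of_int i * P + 2 * of_int j), U2 - (of_int i * P + 2 * of_int k))"
    and X': "X = (T' - 2 * of_int i', U1' - (of_int i' * P + 2 * of_int j'), U2' - (of_int i' * P + 2 * of_int k'))"
    using assms(1,2) unfolding Lambda_rep_def by blast
  have "i' - i = 0" by (rule even_diff_zero) (use X X' assms in auto)
  then have "j' - j = 0" "k' - k = 0" by (auto intro!: even_diff_zero) (use X X' assms in auto)
  then show "T' = T" "U1' = U1" "U2' = U2" using X X' \<open>i' - i = 0\<close> by auto
qed

lemma Lambda_rep_reflect: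
  assumes "Lambda_rep P (Xi P (x, y)) T U1 U2" "2 * y = of_int n"
  shows "Lambda_rep P (Xi P (x, - y)) T U2 U1"
proof -
  obtain i j k :: int where
    "Xi P (x, y) = (T - 2 * of_int i, U1 - (of_int i * P + 2 * of_int j), U2 - (of_int i * P + 2 * of_int k))"
    using assms(1) unfolding Lambda_rep_def by blast
  then have "Xi P (x, - y) = (T - 2 * of_int (i + n), U2 - (of_int (i + n) * P + 2 * of_int k),
      U1 - (of_int (i + n) * P + 2 * of_int j))"
    using assms(2) by (auto simp: Xi_def algebra_simps)
  then show ?thesis unfolding Lambda_rep_def by blast
qed

definition label_witness ::
    "real \<Rightarrow> real \<times> real \<times> real \<Rightarrow> real \<Rightarrow> real \<Rightarrow> real \<Rightarrow> nat \<Rightarrow> nat \<Rightarrow> nat \<Rightarrow> bool" where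
  "label_witness P X T U1 U2 r a b \<longleftrightarrow>
     Lambda_rep P X T U1 U2 \<and> regime_ok P r T \<and> in_rect_interior (cuts P r T) a b U1 U2"

lemma label_witness_bounds:
  assumes "0 < P" "P < 1" "label_witness P X T U1 U2 r a b"
  shows "T \<in> {-1..1}" "U1 \<in> {-1<..<1}" "U2 \<in> {-1<..<1}"
  using assms regime_ok_bounds in_cell_bounds[OF sorted_cuts_cuts]
  by (auto simp: label_witness_def in_rect_interior_iff_in_cell)

lemma has_label_iff_label_witness:
  assumes "0 < Pof p q" "Pof p q < 1"
  shows "has_label p q c L \<longleftrightarrow>
    (\<exists>T U1 U2 r a b. label_witness (Pof p q) (Xi (Pof p q) c) T U1 U2 r a b \<and> L = rect_label r a b)"
proof -
  have Lambda_rep_iff: "Lambda_rep P X T U1 U2 \<longleftrightarrow>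
      (\<exists>v1 v2 v3. (v1, v2, v3) \<in> Lambda P \<and> (T - v1, U1 - v2, U2 - v3) = X)" for P X T U1 U2
    unfolding Lambda_rep_def Lambda_def by fastforce
  show ?thesis
  proof
    assume "has_label p q c L"
    then show "\<exists>T U1 U2 r a b. label_witness (Pof p q) (Xi (Pof p q) c) T U1 U2 r a b \<and> L = rect_label r a b"
      unfolding has_label_def label_witness_def Lambda_rep_iff by blast
  next
    assume "\<exists>T U1 U2 r a b. label_witness (Pof p q) (Xi (Pof p q) c) T U1 U2 r a b \<and> L = rect_label r a b"
    then obtain T U1 U2 r a b where w: "label_witness (Pof p q) (Xi (Pof p q) c) T U1 U2 r a b"
      and L: "L = rect_label r a b" by blast
    then obtain v1 v2 v3 where "(v1, v2, v3) \<in> Lambda (Pof p q)"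
      "(T - v1, U1 - v2, U2 - v3) = Xi (Pof p q) c"
      unfolding label_witness_def Lambda_rep_iff by blast
    moreover have "T \<in> {-1..1}" "U1 \<in> {-1..1}" "U2 \<in> {-1..1}"
      using label_witness_bounds[OF assms w] by auto
    ultimately show "has_label p q c L"
      using w L unfolding has_label_def label_witness_def by blast
  qed
qed

lemma label_witness_top_to_bottom:
  assumes "0 < P" "P < 1" "label_witness P X 1 U1 U2 r a b"
  obtains U1' U2' a' b' where "label_witness P X (-1) U1' U2' 1 a' b'"
    "rect_label 1 a' b' = rect_label r a b"
proof -
  have r: "r = 3" and rect: "in_rect_interior (cuts P 3 1) a b U1 U2"
    using assms by (auto simp: label_witness_def regime_ok_def)
  obtain i j k :: int where
    X: "X = (1 - 2 * of_int i, U1 - (of_int i * P + 2 * of_int j), U2 - (of_int i * P + 2 * of_int k))"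
    using assms(3) by (auto simp: label_witness_def Lambda_rep_def)
  txt \<open>The fibres \<open>T = 1\<close> and \<open>T = -1\<close> differ by the lattice vector \<open>(2,P,P)\<close>.\<close>
  define e :: "real \<Rightarrow> int" where "e z = (if z < -1 + P then 1 else 0)" for z
  define f where "f z = z - P + 2 * of_int (e z)" for z
  let ?g = "\<lambda>a::nat. if a = 1 then 4 else 2"
  have "in_rect_interior (cuts P 1 (-1)) (?g a) (?g b) (f U1) (f U2) \<and>
      rect_label 1 (?g a) (?g b) = rect_label 3 a b"
  proof (rule in_rect_interior_transfer[OF _ _ rect])
    show "a \<in> {1, 3} \<and> in_cell (cuts P 1 (-1)) (?g a) (f z)" if "in_cell (cuts P 3 1) a z" for a z
      using that assms mem_1_4_cases[of a] by (auto simp: in_cell_def cuts_def cutv_def f_def e_def)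
    show "rect_label 1 (?g a) (?g b) = rect_label 3 a b" if "a \<in> {1, 3}" "b \<in> {1, 3}" for a b
      using that by (auto simp: rect_label_def special_def)
  qed
  moreover have "Lambda_rep P X (-1) (f U1) (f U2)"
    unfolding Lambda_rep_def X f_def
    by (intro exI[of _ "i - 1"] exI[of _ "j + e U1"] exI[of _ "k + e U2"]) (simp add: algebra_simps)
  moreover have "regime_ok P 1 (-1)"
    using assms by (simp add: regime_ok_def)
  ultimately show thesis
    using that r unfolding label_witness_def by blast
qed

lemma label_witness_canonical:
  assumes "0 < P" "P < 1" "label_witness P X T U1 U2 r a b"
  obtains T' U1' U2' a' b' where "label_witness P X T' U1' U2' (canonical_regime P T') a' b'"
    "T' < 1" "rect_label (canonical_regime P T') a' b' = rect_label r a b"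
proof -
  have rep: "Lambda_rep P X T U1 U2" and reg: "regime_ok P r T"
    and rect: "in_rect_interior (cuts P r T) a b U1 U2"
    using assms(3) by (auto simp: label_witness_def)
  have "T = 1 \<or> T < 1 \<and> r = canonical_regime P T \<or> r = 2 \<and> T = -1 + P \<or> r = 3 \<and> T = 1 - P"
    using reg assms(1,2) unfolding regime_ok_def canonical_regime_def by (auto split: if_splits)
  then consider "T = 1" | "T < 1" "r = canonical_regime P T" | "r = 2" "T = -1 + P" | "r = 3" "T = 1 - P"
    by blast
  then show thesis
  proof cases
    case 1
    then obtain U1' U2' a' b' where "label_witness P X (-1) U1' U2' 1 a' b'"
      "rect_label 1 a' b' = rect_label r a b"
      using label_witness_top_to_bottom assms by metis
    moreover have "canonical_regime P (-1) = 1"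
      using assms(1) by (simp add: canonical_regime_def)
    ultimately show thesis using that[of "-1"] by simp
  next
    case 2
    then show thesis using that assms(3) by blast
  next
    case 3
    then obtain a' b' where "in_rect_interior (cuts P 1 T) a' b' U1 U2"
      "rect_label 1 a' b' = rect_label r a b"
      using rect_regime2_as_regime1[OF assms(1,2)] rect by metis
    moreover have "canonical_regime P T = 1" "regime_ok P 1 T" "T < 1"
      using 3 assms(1,2) by (auto simp: canonical_regime_def regime_ok_def)
    ultimately show thesis
      using that rep unfolding label_witness_def by metis
  next
    case 4
    then obtain a' b' where "in_rect_interior (cuts P 2 T) a' b' U1 U2"
      "rect_label 2 a' b' = rect_label r a b"
      using rect_regime3_as_regime2[OF assms(1,2)] rect by metis
    moreover have "canonical_regime P T = 2" "regime_ok P 2 T" "T < 1"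
      using 4 assms(1,2) by (auto simp: canonical_regime_def regime_ok_def)
    ultimately show thesis
      using that rep unfolding label_witness_def by metis
  qed
qed

lemma label_witness_canonical_unique:
  assumes "0 < P" "P < 1"
    and "label_witness P X T U1 U2 (canonical_regime P T) a b" "T < 1"
    and "label_witness P X T' U1' U2' (canonical_regime P T') a' b'" "T' < 1"
  shows "T' = T" "a' = a" "b' = b"
proof -
  note bounds = label_witness_bounds[OF assms(1,2,3)] label_witness_bounds[OF assms(1,2,5)]
  have "T' = T" "U1' = U1" "U2' = U2"
    using Lambda_rep_unique[of P X T U1 U2 T' U1' U2'] assms bounds
    by (auto simp: label_witness_def)
  moreover have sorted: "sorted_cuts (cuts P (canonical_regime P T) T)"
    using assms(1,2,3) sorted_cuts_cuts by (auto simp: label_witness_def)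
  ultimately show "T' = T" "a' = a" "b' = b"
    using in_cell_unique[OF sorted, of a U1 a'] in_cell_unique[OF sorted, of b U2 b'] assms(3,5)
    by (auto simp: label_witness_def in_rect_interior_iff_in_cell)
qed

lemma has_label_unique:
  assumes "0 < Pof p q" "Pof p q < 1" "has_label p q c L" "has_label p q c L'"
  shows "L' = L"
proof -
  let ?P = "Pof p q" and ?X = "Xi (Pof p q) c"
  obtain T U1 U2 a b where w: "label_witness ?P ?X T U1 U2 (canonical_regime ?P T) a b" "T < 1"
    and L: "L = rect_label (canonical_regime ?P T) a b"
    using assms(3) label_witness_canonical[OF assms(1,2)]
    unfolding has_label_iff_label_witness[OF assms(1,2)] by metis
  obtain T' U1' U2' a' b' where w': "label_witness ?P ?X T' U1' U2' (canonical_regime ?P T') a' b'" "T' < 1"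
    and L': "L' = rect_label (canonical_regime ?P T') a' b'"
    using assms(4) label_witness_canonical[OF assms(1,2)]
    unfolding has_label_iff_label_witness[OF assms(1,2)] by metis
  show ?thesis
    using label_witness_canonical_unique[OF assms(1,2) w w'] L L' by simp
qed

lemma has_label_reflect:
  assumes "0 < Pof p q" "Pof p q < 1" "has_label p q (x, y) L" "2 * y = of_int n"
  shows "has_label p q (x, - y) (swapNS ` L)"
proof -
  obtain T U1 U2 r a b where "label_witness (Pof p q) (Xi (Pof p q) (x, y)) T U1 U2 r a b"
    and L: "L = rect_label r a b"
    using assms(3) unfolding has_label_iff_label_witness[OF assms(1,2)] by blast
  then have "label_witness (Pof p q) (Xi (Pof p q) (x, - y)) T U2 U1 r b a"
    using Lambda_rep_reflect[OF _ assms(4)] by (auto simp: label_witness_def in_rect_interior_def)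
  then show ?thesis
    unfolding has_label_iff_label_witness[OF assms(1,2)] L rect_label_transpose[symmetric] by blast
qed

lemma Pof_bounds:
  assumes "0 < p" "p < q"
  shows "0 < Pof p q" "Pof p q < 1"
  using assms by (auto simp: Pof_def field_simps)

lemma even_rational_param_odd_sum:
  assumes "even_rational_param p q"
  shows "odd (p + q)"
proof
  assume "even (p + q)"
  moreover have "coprime p q" "even p \<or> even q"
    using assms by (auto simp: even_rational_param_def)
  ultimately have "2 dvd p" "2 dvd q"
    by auto
  with \<open>coprime p q\<close> have "is_unit (2 :: nat)"
    using coprime_common_divisor by blast
  then show False
    by simp
qed

lemma cutv_cuts_scaled_odd:
  fixes W t p' :: int
  assumes "odd W" "P * of_int W = of_int (2 * p')" "T * of_int W = of_int t" "odd t" "i \<le> 3"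
  shows "\<exists>b. cutv (cuts P r T) i * of_int W = of_int b \<and> odd b"
proof -
  let ?odd = "\<lambda>z. \<exists>b. z * of_int W = of_int b \<and> odd b"
  have "cutv (cuts P r T) i \<in> {-1, T, 1 - P, -1 + P, 2 - P + T, -2 + P + T}"
    using assms(5) by (auto simp: cuts_def cutv_def le_Suc_eq numeral_3_eq_3)
  moreover have "?odd (-1)" by (rule exI[of _ "- W"]) (use assms in simp)
  moreover have "?odd T" by (rule exI[of _ t]) (use assms in simp)
  moreover have "?odd (1 - P)" by (rule exI[of _ "W - 2 * p'"]) (use assms in \<open>simp add: algebra_simps\<close>)
  moreover have "?odd (-1 + P)" by (rule exI[of _ "2 * p' - W"]) (use assms in \<open>simp add: algebra_simps\<close>)
  moreover have "?odd (2 - P + T)"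
    by (rule exI[of _ "2 * W - 2 * p' + t"]) (use assms in \<open>simp add: algebra_simps\<close>)
  moreover have "?odd (-2 + P + T)"
    by (rule exI[of _ "t + 2 * p' - 2 * W"]) (use assms in \<open>simp add: algebra_simps\<close>)
  ultimately show ?thesis
    by (metis empty_iff insertE)
qed

lemma in_cell_if_scaled_even:
  fixes W t p' b :: int
  assumes "0 < P" "P < 1" "regime_ok P r T"
    and "odd W" "P * of_int W = of_int (2 * p')" "T * of_int W = of_int t" "odd t"
    and "z \<in> {-1..<1}" "z * of_int W = of_int b" "even b"
  obtains a where "in_cell (cuts P r T) a z"
proof -
  have off_grid: "z \<noteq> cutv (cuts P r T) i" if i: "i \<le> 3" for i
  proof
    assume "z = cutv (cuts P r T) i"
    moreover obtain b' where "cutv (cuts P r T) i * of_int W = of_int b'" "odd b'"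
      using cutv_cuts_scaled_odd[OF assms(4-7) i] by blast
    ultimately have "b' = b"
      using assms(9) by (metis of_int_eq_iff)
    then show False
      using assms(10) \<open>odd b'\<close> by simp
  qed
  have "cutv (cuts P r T) 0 = -1"
    by (simp add: cutv_def split: prod.split)
  then have "z \<in> {-1<..<1}"
    using off_grid[of 0] assms(8) by auto
  moreover have "z \<notin> {cutv (cuts P r T) 1, cutv (cuts P r T) 2, cutv (cuts P r T) 3}"
    using off_grid[of 1] off_grid[of 2] off_grid[of 3] by auto
  ultimately show thesis
    using in_cell_exists[OF sorted_cuts_cuts[OF assms(1-3)]] that by blast
qed

lemma Lambda_rep_tile_center_scaled:
  fixes W p' :: int
  assumes "odd W" "P * of_int W = of_int (2 * p')" "Lambda_rep P (Xi P (tile_center m n)) T U1 U2"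
  obtains t u1 u2 :: int where "T * of_int W = of_int t" "odd t"
    "U1 * of_int W = of_int u1" "even u1" "U2 * of_int W = of_int u2" "even u2"
proof -
  have scale: "(P * of_int c + of_int d) * of_int W = of_int (2 * p' * c + d * W)" for c d
  proof -
    have "(P * of_int c + of_int d) * of_int W = (P * of_int W) * of_int c + of_int d * of_int W"
      by (simp add: algebra_simps)
    then show ?thesis using assms(2) by simp
  qed
  obtain i j k :: int where "T = P * of_int (2 * m + 1) + of_int (2 * n + 1 + 2 * i)"
    "U1 = P * of_int (2 * m + 1 + i) + of_int (2 * j)"
    "U2 = P * of_int (2 * m + 2 * n + 2 + i) + of_int (2 * k)"
    using assms(3) unfolding Lambda_rep_def by (auto simp: Xi_def tile_center_def algebra_simps)
  then have T: "T * of_int W = of_int (2 * p' * (2 * m + 1) + (2 * n + 1 + 2 * i) * W)"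
    and U1: "U1 * of_int W = of_int (2 * p' * (2 * m + 1 + i) + 2 * j * W)"
    and U2: "U2 * of_int W = of_int (2 * p' * (2 * m + 2 * n + 2 + i) + 2 * k * W)"
    by (simp_all only: scale)
  show thesis
    by (rule that[OF T _ U1 _ U2]) (use assms(1) in simp_all)
qed

lemma has_label_tile_center_exists:
  assumes "0 < p" "p < q" "odd (p + q)"
  obtains L where "has_label p q (tile_center m n) L"
proof -
  define P where "P = Pof p q"
  define W where "W = int (p + q)"
  have P: "0 < P" "P < 1"
    unfolding P_def using Pof_bounds assms by auto
  have PW: "P * of_int W = of_int (2 * int p)"
    using assms by (simp add: P_def Pof_def W_def)
  have W: "odd W"
    using assms(3) by (simp add: W_def)
  obtain T U1 U2 where rep: "Lambda_rep P (Xi P (tile_center m n)) T U1 U2"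
    and T: "T \<in> {-1..<1}" and U: "U1 \<in> {-1..<1}" "U2 \<in> {-1..<1}"
    by (rule Lambda_rep_exists)
  obtain t u1 u2 where t: "T * of_int W = of_int t" "odd t"
    and u: "U1 * of_int W = of_int u1" "even u1" "U2 * of_int W = of_int u2" "even u2"
    using Lambda_rep_tile_center_scaled[OF W PW rep] .
  define r where "r = canonical_regime P T"
  have reg: "regime_ok P r T"
    unfolding r_def using regime_ok_canonical_regime[OF P] T by auto
  obtain a b where "in_cell (cuts P r T) a U1" "in_cell (cuts P r T) b U2"
    using in_cell_if_scaled_even[OF P reg W PW t U(1) u(1,2)]
      in_cell_if_scaled_even[OF P reg W PW t U(2) u(3,4)] by metis
  then have "label_witness (Pof p q) (Xi (Pof p q) (tile_center m n)) T U1 U2 r a b"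
    using rep reg unfolding label_witness_def in_rect_interior_iff_in_cell P_def by blast
  then have "has_label p q (tile_center m n) (rect_label r a b)"
    unfolding has_label_iff_label_witness[OF P[unfolded P_def]] by blast
  then show thesis by (rule that)
qed

lemma tile_label_eqI:
  assumes "0 < Pof p q" "Pof p q < 1" "has_label p q c L"
  shows "tile_label p q c = L"
  unfolding tile_label_def
  by (rule the_equality) (use assms has_label_unique in blast)+

theorem lemma3p5:
  fixes p q :: nat and m n :: int and x y :: real
  assumes "even_rational_param p q"
    and "(x, y) = tile_center m n"
  shows "tile_label p q (x, - y) = swapNS ` tile_label p q (x, y)"
proof -
  have pq: "0 < p" "p < q"
    using assms(1) by (auto simp: even_rational_param_def)
  note P = Pof_bounds[OF pq]
  obtain L where L: "has_label p q (x, y) L"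
    using has_label_tile_center_exists[OF pq even_rational_param_odd_sum[OF assms(1)], of m n] assms(2)
    by auto
  have "2 * y = of_int (2 * n + 1)"
    using assms(2) by (simp add: tile_center_def)
  then have "has_label p q (x, - y) (swapNS ` L)"
    by (rule has_label_reflect[OF P L])
  then show ?thesis
    using tile_label_eqI[OF P] L by simp
qed

end
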